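(* Let $\Omega\subseteq\mathbb{R}^n$ be open. (i) The set $\mathbb{G}(\Omega)$ of all D-continuous interval functions on $\Omega$ is order complete with respect to $\le$ (every subset has a supremum and an infimum in $\mathbb{G}(\Omega)$). (ii) Each of the following sets is Dedekind order complete with respect to $\le$: the set $\mathbb{G}_{bd}(\Omega)$ of all bounded D-continuous interval functions; the set $\mathbb{G}_{ft}(\Omega)$ of all finite D-continuous interval functions; the set $\mathbb{G}_{nf}(\Omega)$ of all nearly finite D-continuous interval functions.
   Context: $\overline{\mathbb{R}}=\mathbb{R}\cup\{\pm\infty\}$, $\mathbb{I}\overline{\mathbb{R}}$ is the set of closed intervals $[\underline a,\overline a]$ with $\underline a\le\overline a$ in $\overline{\mathbb{R}}$, $a\in\overline{\mathbb{R}}$ identified with $[a,a]$. $\mathbb{A}(X)$ is the set of functions $X\to\mathbb{I}\overline{\mathbb{R}}$. Order: $[\underline a,\overline a]\le[\underline b,\overline b]$ iff $\underline a\le\underline b$ and $\overline a\le\overline b$; $f\le g$ iff $f(x)\le g(x)$ for all $x$. $B_\delta(x)=\{y\in\Omega:\|x-y\|<\delta\}$. For dense $D\subseteq\Omega$ and $f\in\mathbb{A}(D)$: $I(D,\Omega,f)(x)=\sup_{\delta>0}\inf\{z\in f(y):y\in B_\delta(x)\cap D\}$, $S(D,\Omega,f)(x)=\inf_{\delta>0}\sup\{z\in f(y):y\in B_\delta(x)\cap D\}$, $F(D,\Omega,f)(x)=[I(D,\Omega,f)(x),S(D,\Omega,f)(x)]$. $f\in\mathbb{A}(\Omega)$ is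 D-continuous if $F(D,\Omega,f)=f$ for every dense $D\subseteq\Omega$. $f$ is bounded if there is $M\in\mathbb{R}$ with $f(x)\subseteq[-M,M]$ for all $x$; finite if $f(x)$ is a finite interval (both endpoints in $\mathbb{R}$) for all $x\in\Omega$; nearly finite if there is an open dense $D\subseteq\Omega$ with $f(x)$ finite for all $x\in D$. A poset is Dedekind order complete if every nonempty subset bounded above has a supremum in it and every nonempty subset bounded below has an infimum in it. *)

theory Defs
  imports "HOL-Analysis.Analysis"
begin

text \<open>An extended-real interval [lo, hi] is a pair (lo, hi) with lo \<le> hi.
  An interval function on X is a function into such pairs; outside X it is
  fixed to be undefined (extensional), so that the pointwise order on X is
  antisymmetric.\<close>

type_synonym ivl = "ereal \<times> ereal"

definition ivl_funs :: "'a set \<Rightarrow> ('a \<Rightarrow> ivl) set" where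
  "ivl_funs X = {f. (\<forall>x\<in>X. fst (f x) \<le> snd (f x)) \<and> (\<forall>x. x \<notin> X \<longrightarrow> f x = undefined)}"

definition ivl_le :: "'a set \<Rightarrow> ('a \<Rightarrow> ivl) \<Rightarrow> ('a \<Rightarrow> ivl) \<Rightarrow> bool" where
  "ivl_le X f g \<longleftrightarrow> (\<forall>x\<in>X. fst (f x) \<le> fst (g x) \<and> snd (f x) \<le> snd (g x))"

definition Bdelta :: "('a::metric_space) set \<Rightarrow> real \<Rightarrow> 'a \<Rightarrow> 'a set" where
  "Bdelta \<Omega> \<delta> x = {y \<in> \<Omega>. dist x y < \<delta>}"

definition vals :: "('a::metric_space) set \<Rightarrow> 'a set \<Rightarrow> ('a \<Rightarrow> ivl) \<Rightarrow> real \<Rightarrow> 'a \<Rightarrow> ereal set" where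
  "vals D \<Omega> f \<delta> x = {z. \<exists>y \<in> Bdelta \<Omega> \<delta> x \<inter> D. fst (f y) \<le> z \<and> z \<le> snd (f y)}"

definition I_env :: "('a::metric_space) set \<Rightarrow> 'a set \<Rightarrow> ('a \<Rightarrow> ivl) \<Rightarrow> 'a \<Rightarrow> ereal" where
  "I_env D \<Omega> f x = (SUP \<delta>\<in>{0<..}. Inf (vals D \<Omega> f \<delta> x))"

definition S_env :: "('a::metric_space) set \<Rightarrow> 'a set \<Rightarrow> ('a \<Rightarrow> ivl) \<Rightarrow> 'a \<Rightarrow> ereal" where
  "S_env D \<Omega> f x = (INF \<delta>\<in>{0<..}. Sup (vals D \<Omega> f \<delta> x))"

definition F_env :: "('a::metric_space) set \<Rightarrow> 'a set \<Rightarrow> ('a \<Rightarrow> ivl) \<Rightarrow> 'a \<Rightarrow> ivl" where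
  "F_env D \<Omega> f x = (if x \<in> \<Omega> then (I_env D \<Omega> f x, S_env D \<Omega> f x) else undefined)"

definition dense_in :: "('a::topological_space) set \<Rightarrow> 'a set \<Rightarrow> bool" where
  "dense_in D \<Omega> \<longleftrightarrow> D \<subseteq> \<Omega> \<and> \<Omega> \<subseteq> closure D"

definition D_continuous :: "('a::metric_space) set \<Rightarrow> ('a \<Rightarrow> ivl) \<Rightarrow> bool" where
  "D_continuous \<Omega> f \<longleftrightarrow> f \<in> ivl_funs \<Omega> \<and> (\<forall>D. dense_in D \<Omega> \<longrightarrow> F_env D \<Omega> f = f)"

definition G_set :: "('a::metric_space) set \<Rightarrow> ('a \<Rightarrow> ivl) set" where
  "G_set \<Omega> = {f. D_continuous \<Omega> f}"

definition ivl_bounded :: "'a set \<Rightarrow> ('a \<Rightarrow> ivl) \<Rightarrow> bool" where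
  "ivl_bounded \<Omega> f \<longleftrightarrow> (\<exists>M::real. \<forall>x\<in>\<Omega>. - ereal M \<le> fst (f x) \<and> snd (f x) \<le> ereal M)"

definition finite_ivl :: "ivl \<Rightarrow> bool" where
  "finite_ivl a \<longleftrightarrow> \<bar>fst a\<bar> \<noteq> \<infinity> \<and> \<bar>snd a\<bar> \<noteq> \<infinity>"

definition ivl_finite :: "'a set \<Rightarrow> ('a \<Rightarrow> ivl) \<Rightarrow> bool" where
  "ivl_finite \<Omega> f \<longleftrightarrow> (\<forall>x\<in>\<Omega>. finite_ivl (f x))"

definition ivl_nearly_finite :: "('a::topological_space) set \<Rightarrow> ('a \<Rightarrow> ivl) \<Rightarrow> bool" where
  "ivl_nearly_finite \<Omega> f \<longleftrightarrow> (\<exists>D. open D \<and> dense_in D \<Omega> \<and> (\<forall>x\<in>D. finite_ivl (f x)))"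

definition is_sup_in :: "('b \<Rightarrow> 'b \<Rightarrow> bool) \<Rightarrow> 'b set \<Rightarrow> 'b set \<Rightarrow> 'b \<Rightarrow> bool" where
  "is_sup_in le P S s \<longleftrightarrow> s \<in> P \<and> (\<forall>f\<in>S. le f s) \<and> (\<forall>u\<in>P. (\<forall>f\<in>S. le f u) \<longrightarrow> le s u)"

definition is_inf_in :: "('b \<Rightarrow> 'b \<Rightarrow> bool) \<Rightarrow> 'b set \<Rightarrow> 'b set \<Rightarrow> 'b \<Rightarrow> bool" where
  "is_inf_in le P S s \<longleftrightarrow> s \<in> P \<and> (\<forall>f\<in>S. le s f) \<and> (\<forall>u\<in>P. (\<forall>f\<in>S. le u f) \<longrightarrow> le u s)"

definition order_complete :: "('b \<Rightarrow> 'b \<Rightarrow> bool) \<Rightarrow> 'b set \<Rightarrow> bool" where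
  "order_complete le P \<longleftrightarrow>
     (\<forall>S. S \<subseteq> P \<longrightarrow> (\<exists>s. is_sup_in le P S s) \<and> (\<exists>s. is_inf_in le P S s))"

definition dedekind_complete :: "('b \<Rightarrow> 'b \<Rightarrow> bool) \<Rightarrow> 'b set \<Rightarrow> bool" where
  "dedekind_complete le P \<longleftrightarrow>
     (\<forall>S. S \<subseteq> P \<and> S \<noteq> {} \<and> (\<exists>u\<in>P. \<forall>f\<in>S. le f u) \<longrightarrow> (\<exists>s. is_sup_in le P S s)) \<and>
     (\<forall>S. S \<subseteq> P \<and> S \<noteq> {} \<and> (\<exists>l\<in>P. \<forall>f\<in>S. le l f) \<longrightarrow> (\<exists>s. is_inf_in le P S s))"

end

theory Submission
  imports Defs
begin

(* An interval function f = [f_lo, f_hi] is D-continuous iff both f_lo and -f_hi are lower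
   D-continuous, i.e. equal to their lower envelope relative to every dense subset of Omega.
   The lower regularization
     Psi g x = sup_{delta > 0} inf {sup_U g | U nonempty open, U within B_delta(x)}
   is lower D-continuous, lies above every lower D-continuous minorant of g and below every
   lower D-continuous majorant of g.  So for S within G(Omega) the supremum is
   [Psi (sup_S f_lo), - Psi (- sup_S f_hi)]; it is a genuine interval because sup_S f_lo is lower
   semicontinuous.  Infima are suprema of the lower bounds, and the bounded, finite and nearly
   finite functions form order-convex subsets of G(Omega), which inherit Dedekind completeness. *)

lemma Bdelta_eq: "Bdelta \<Omega> \<delta> x = \<Omega> \<inter> ball x \<delta>"
  by (auto simp: Bdelta_def)

lemma open_Bdelta: "open \<Omega> \<Longrightarrow> open (Bdelta \<Omega> \<delta> x)"
  by (simp add: Bdelta_eq open_Int)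

lemma centre_in_Bdelta: "x \<in> \<Omega> \<Longrightarrow> 0 < \<delta> \<Longrightarrow> x \<in> Bdelta \<Omega> \<delta> x"
  by (simp add: Bdelta_eq)

lemma Bdelta_subset: "Bdelta \<Omega> \<delta> x \<subseteq> \<Omega>"
  by (simp add: Bdelta_eq)

lemma Bdelta_mono: "\<delta> \<le> \<epsilon> \<Longrightarrow> Bdelta \<Omega> \<delta> x \<subseteq> Bdelta \<Omega> \<epsilon> x"
  by (auto simp: Bdelta_def)

lemma Bdelta_half_subset: "y \<in> Bdelta \<Omega> (\<delta>/2) x \<Longrightarrow> Bdelta \<Omega> (\<delta>/2) y \<subseteq> Bdelta \<Omega> \<delta> x"
  by (auto simp: Bdelta_def) (smt (verit) dist_triangle)

lemma dense_in_refl: "dense_in \<Omega> \<Omega>"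
  by (auto simp: dense_in_def closure_subset)

lemma dense_in_meets_open:
  "dense_in D \<Omega> \<Longrightarrow> open U \<Longrightarrow> U \<noteq> {} \<Longrightarrow> U \<subseteq> \<Omega> \<Longrightarrow> U \<inter> D \<noteq> {}"
  unfolding dense_in_def using open_Int_closure_eq_empty by blast

lemma dense_in_Diff_empty_interior:
  assumes "open \<Omega>" "interior A = {}"
  shows "dense_in (\<Omega> - A) \<Omega>"
proof -
  have "\<Omega> = \<Omega> \<inter> closure (- A)"
    using assms(2) by (simp add: closure_complement)
  also have "\<dots> \<subseteq> closure (\<Omega> - A)"
    using open_Int_closure_subset[OF assms(1)] by (simp add: Diff_eq)
  finally show ?thesis by (auto simp: dense_in_def)
qed

lemma dense_in_Int_open:
  assumes "open D1" "dense_in D1 \<Omega>" "dense_in D2 \<Omega>"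
  shows "dense_in (D1 \<inter> D2) \<Omega>"
proof -
  have "D1 \<subseteq> closure (D1 \<inter> D2)"
    using open_Int_closure_subset[OF assms(1), of D2] assms(2,3) by (auto simp: dense_in_def)
  then have "closure D1 \<subseteq> closure (D1 \<inter> D2)"
    by (simp add: closure_minimal)
  with assms(2) show ?thesis
    by (auto simp: dense_in_def)
qed

lemma ereal_le_uminus_reorder: "(a::ereal) \<le> - b \<longleftrightarrow> b \<le> - a"
  by (metis ereal_uminus_le_reorder ereal_uminus_uminus)

definition lower_env :: "('a::metric_space) set \<Rightarrow> 'a set \<Rightarrow> ('a \<Rightarrow> ereal) \<Rightarrow> 'a \<Rightarrow> ereal" where
  "lower_env D \<Omega> g x = (SUP \<delta>\<in>{0<..}. INF y\<in>Bdelta \<Omega> \<delta> x \<inter> D. g y)"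

definition lower_D_continuous :: "('a::metric_space) set \<Rightarrow> ('a \<Rightarrow> ereal) \<Rightarrow> bool" where
  "lower_D_continuous \<Omega> g \<longleftrightarrow> (\<forall>D. dense_in D \<Omega> \<longrightarrow> (\<forall>x\<in>\<Omega>. lower_env D \<Omega> g x = g x))"

lemma lower_env_cong:
  assumes "D \<subseteq> \<Omega>" "\<And>y. y \<in> \<Omega> \<Longrightarrow> g y = h y"
  shows "lower_env D \<Omega> g x = lower_env D \<Omega> h x"
  unfolding lower_env_def using assms Bdelta_subset by (intro SUP_cong refl INF_cong) blast+

lemma lower_D_continuous_cong:
  assumes "lower_D_continuous \<Omega> g" "\<And>y. y \<in> \<Omega> \<Longrightarrow> g y = h y"
  shows "lower_D_continuous \<Omega> h"
  using assms lower_env_cong[of _ \<Omega> g h] unfolding lower_D_continuous_def dense_in_def by auto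

lemma lower_D_continuous_lower_env_self:
  "lower_D_continuous \<Omega> g \<Longrightarrow> x \<in> \<Omega> \<Longrightarrow> lower_env \<Omega> \<Omega> g x = g x"
  unfolding lower_D_continuous_def using dense_in_refl by blast

lemma open_superlevel_lower_D_continuous:
  assumes "open \<Omega>" "lower_D_continuous \<Omega> g"
  shows "open {y \<in> \<Omega>. t < g y}"
  unfolding open_contains_ball
proof (intro ballI)
  fix y assume "y \<in> {y \<in> \<Omega>. t < g y}"
  then have y: "y \<in> \<Omega>" "t < lower_env \<Omega> \<Omega> g y"
    using lower_D_continuous_lower_env_self[OF assms(2)] by auto
  then obtain \<delta> where "\<delta> > 0" and t: "t < (INF z\<in>Bdelta \<Omega> \<delta> y \<inter> \<Omega>. g z)"
    by (auto simp: lower_env_def less_SUP_iff)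
  obtain \<epsilon> where "\<epsilon> > 0" "ball y \<epsilon> \<subseteq> \<Omega>"
    using assms(1) y(1) open_contains_ball by blast
  have "ball y (min \<delta> \<epsilon>) \<subseteq> {y \<in> \<Omega>. t < g y}"
  proof
    fix z assume "z \<in> ball y (min \<delta> \<epsilon>)"
    with \<open>ball y \<epsilon> \<subseteq> \<Omega>\<close> have "z \<in> Bdelta \<Omega> \<delta> y \<inter> \<Omega>"
      by (auto simp: Bdelta_eq)
    then have "(INF z\<in>Bdelta \<Omega> \<delta> y \<inter> \<Omega>. g z) \<le> g z"
      by (rule INF_lower)
    with t \<open>z \<in> Bdelta \<Omega> \<delta> y \<inter> \<Omega>\<close> show "z \<in> {y \<in> \<Omega>. t < g y}"
      by auto
  qed
  with \<open>\<delta> > 0\<close> \<open>\<epsilon> > 0\<close> show "\<exists>e>0. ball y e \<subseteq> {y \<in> \<Omega>. t < g y}"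
    by (intro exI[of _ "min \<delta> \<epsilon>"]) auto
qed

text \<open>Otherwise the complement of the sublevel set would be a dense set on which the lower
  envelope at \<open>x\<close> is at least \<open>c\<close>.\<close>
lemma interior_sublevel_lower_D_continuous:
  assumes "open \<Omega>" "lower_D_continuous \<Omega> g" "x \<in> \<Omega>" "g x < c" "0 < \<delta>"
  shows "interior {y \<in> Bdelta \<Omega> \<delta> x. g y < c} \<noteq> {}"
proof
  define A where "A = {y \<in> Bdelta \<Omega> \<delta> x. g y < c}"
  assume "interior A = {}"
  with assms(1) have "dense_in (\<Omega> - A) \<Omega>"
    by (rule dense_in_Diff_empty_interior)
  then have "lower_env (\<Omega> - A) \<Omega> g x = g x"
    using assms(2,3) by (auto simp: lower_D_continuous_def)
  moreover have "c \<le> (INF y\<in>Bdelta \<Omega> \<delta> x \<inter> (\<Omega> - A). g y)"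
    by (rule INF_greatest) (auto simp: A_def not_less)
  then have "c \<le> lower_env (\<Omega> - A) \<Omega> g x"
    unfolding lower_env_def using assms(5) by (auto intro: SUP_upper2)
  ultimately show False
    using assms(4) by simp
qed

definition nonempty_open_subsets :: "('a::topological_space) set \<Rightarrow> 'a set set" where
  "nonempty_open_subsets V = {U. open U \<and> U \<noteq> {} \<and> U \<subseteq> V}"

definition inf_sup_open :: "('a::topological_space \<Rightarrow> ereal) \<Rightarrow> 'a set \<Rightarrow> ereal" where
  "inf_sup_open g V = (INF U\<in>nonempty_open_subsets V. SUP y\<in>U. g y)"

definition lower_regularization :: "('a::metric_space) set \<Rightarrow> ('a \<Rightarrow> ereal) \<Rightarrow> 'a \<Rightarrow> ereal" where
  "lower_regularization \<Omega> g x = (SUP \<delta>\<in>{0<..}. inf_sup_open g (Bdelta \<Omega> \<delta> x))"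

lemma inf_sup_open_antimono: "V \<subseteq> W \<Longrightarrow> inf_sup_open g W \<le> inf_sup_open g V"
  unfolding inf_sup_open_def
  by (rule INF_superset_mono) (auto simp: nonempty_open_subsets_def)

lemma inf_sup_open_le_SUP:
  "open U \<Longrightarrow> U \<noteq> {} \<Longrightarrow> U \<subseteq> V \<Longrightarrow> inf_sup_open g V \<le> (SUP y\<in>U. g y)"
  unfolding inf_sup_open_def by (rule INF_lower) (simp add: nonempty_open_subsets_def)

lemma inf_sup_open_le_lower_regularization:
  "0 < \<delta> \<Longrightarrow> inf_sup_open g (Bdelta \<Omega> \<delta> x) \<le> lower_regularization \<Omega> g x"
  unfolding lower_regularization_def by (auto intro: SUP_upper)

lemma lower_regularization_le_SUP_open:
  assumes "open U" "U \<subseteq> \<Omega>" "y \<in> U"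
  shows "lower_regularization \<Omega> g y \<le> (SUP z\<in>U. g z)"
  unfolding lower_regularization_def
proof (rule SUP_least)
  fix \<epsilon> :: real assume "\<epsilon> \<in> {0<..}"
  have "Bdelta \<Omega> \<epsilon> y \<inter> U = ball y \<epsilon> \<inter> U"
    using assms(2) by (auto simp: Bdelta_eq)
  then have "open (Bdelta \<Omega> \<epsilon> y \<inter> U)" "y \<in> Bdelta \<Omega> \<epsilon> y \<inter> U"
    using assms \<open>\<epsilon> \<in> {0<..}\<close> by auto
  then have "inf_sup_open g (Bdelta \<Omega> \<epsilon> y) \<le> (SUP z\<in>Bdelta \<Omega> \<epsilon> y \<inter> U. g z)"
    by (intro inf_sup_open_le_SUP) blast+
  also have "\<dots> \<le> (SUP z\<in>U. g z)"
    by (rule SUP_subset_mono) auto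
  finally show "inf_sup_open g (Bdelta \<Omega> \<epsilon> y) \<le> (SUP z\<in>U. g z)" .
qed

lemma lower_env_lower_regularization_le:
  assumes "open \<Omega>" "dense_in D \<Omega>"
  shows "lower_env D \<Omega> (lower_regularization \<Omega> g) x \<le> lower_regularization \<Omega> g x"
  unfolding lower_env_def
proof (rule SUP_least)
  fix \<delta> :: real assume "\<delta> \<in> {0<..}"
  show "(INF y\<in>Bdelta \<Omega> \<delta> x \<inter> D. lower_regularization \<Omega> g y) \<le> lower_regularization \<Omega> g x"
  proof (rule dense_ge)
    fix c assume "lower_regularization \<Omega> g x < c"
    with \<open>\<delta> \<in> {0<..}\<close> have "inf_sup_open g (Bdelta \<Omega> \<delta> x) < c"
      using inf_sup_open_le_lower_regularization[of \<delta> g \<Omega> x] by simp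
    then obtain U where U: "open U" "U \<noteq> {}" "U \<subseteq> Bdelta \<Omega> \<delta> x" and "(SUP y\<in>U. g y) < c"
      by (auto simp: inf_sup_open_def INF_less_iff nonempty_open_subsets_def)
    moreover obtain y where "y \<in> U" "y \<in> D"
      using dense_in_meets_open[OF assms(2) U(1,2)] U(3) Bdelta_subset by blast
    moreover have "U \<subseteq> \<Omega>"
      using U(3) Bdelta_subset by blast
    ultimately have "(INF y\<in>Bdelta \<Omega> \<delta> x \<inter> D. lower_regularization \<Omega> g y) \<le> (SUP y\<in>U. g y)"
      using lower_regularization_le_SUP_open[OF U(1)] by (meson INF_lower2 IntI subsetD)
    with \<open>(SUP y\<in>U. g y) < c\<close> show "(INF y\<in>Bdelta \<Omega> \<delta> x \<inter> D. lower_regularization \<Omega> g y) \<le> c"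
      by simp
  qed
qed

lemma lower_regularization_le_lower_env:
  "lower_regularization \<Omega> g x \<le> lower_env D \<Omega> (lower_regularization \<Omega> g) x"
  unfolding lower_regularization_def[of \<Omega> g x]
proof (rule SUP_least)
  fix \<delta> :: real assume "\<delta> \<in> {0<..}"
  then have "0 < \<delta>/2" by simp
  have "inf_sup_open g (Bdelta \<Omega> \<delta> x) \<le> (INF y\<in>Bdelta \<Omega> (\<delta>/2) x \<inter> D. lower_regularization \<Omega> g y)"
  proof (rule INF_greatest)
    fix y assume "y \<in> Bdelta \<Omega> (\<delta>/2) x \<inter> D"
    then have "inf_sup_open g (Bdelta \<Omega> \<delta> x) \<le> inf_sup_open g (Bdelta \<Omega> (\<delta>/2) y)"
      by (intro inf_sup_open_antimono Bdelta_half_subset) auto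
    also have "\<dots> \<le> lower_regularization \<Omega> g y"
      using \<open>0 < \<delta>/2\<close> by (rule inf_sup_open_le_lower_regularization)
    finally show "inf_sup_open g (Bdelta \<Omega> \<delta> x) \<le> lower_regularization \<Omega> g y" .
  qed
  also have "\<dots> \<le> lower_env D \<Omega> (lower_regularization \<Omega> g) x"
    unfolding lower_env_def using \<open>0 < \<delta>/2\<close> by (auto intro: SUP_upper)
  finally show "inf_sup_open g (Bdelta \<Omega> \<delta> x) \<le> lower_env D \<Omega> (lower_regularization \<Omega> g) x" .
qed

lemma lower_D_continuous_lower_regularization:
  "open \<Omega> \<Longrightarrow> lower_D_continuous \<Omega> (lower_regularization \<Omega> g)"
  unfolding lower_D_continuous_def
  using lower_env_lower_regularization_le lower_regularization_le_lower_env by (blast intro: antisym)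

lemma le_lower_regularization:
  assumes "lower_D_continuous \<Omega> a" "\<And>y. y \<in> \<Omega> \<Longrightarrow> a y \<le> g y" "x \<in> \<Omega>"
  shows "a x \<le> lower_regularization \<Omega> g x"
proof -
  have "lower_env \<Omega> \<Omega> a x \<le> lower_regularization \<Omega> g x"
    unfolding lower_env_def
  proof (rule SUP_least)
    fix \<delta> :: real assume "\<delta> \<in> {0<..}"
    have "(INF y\<in>Bdelta \<Omega> \<delta> x \<inter> \<Omega>. a y) \<le> (SUP y\<in>U. g y)"
      if "U \<in> nonempty_open_subsets (Bdelta \<Omega> \<delta> x)" for U
    proof -
      from that obtain y where y: "y \<in> U" "y \<in> Bdelta \<Omega> \<delta> x \<inter> \<Omega>"
        using Bdelta_subset by (fastforce simp: nonempty_open_subsets_def)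
      then have "(INF y\<in>Bdelta \<Omega> \<delta> x \<inter> \<Omega>. a y) \<le> a y"
        by (blast intro: INF_lower)
      also have "\<dots> \<le> g y"
        using assms(2) y by blast
      also have "\<dots> \<le> (SUP y\<in>U. g y)"
        using y(1) by (rule SUP_upper)
      finally show ?thesis .
    qed
    then have "(INF y\<in>Bdelta \<Omega> \<delta> x \<inter> \<Omega>. a y) \<le> inf_sup_open g (Bdelta \<Omega> \<delta> x)"
      unfolding inf_sup_open_def by (rule INF_greatest)
    also have "\<dots> \<le> lower_regularization \<Omega> g x"
      using \<open>\<delta> \<in> {0<..}\<close> by (simp add: inf_sup_open_le_lower_regularization)
    finally show "(INF y\<in>Bdelta \<Omega> \<delta> x \<inter> \<Omega>. a y) \<le> lower_regularization \<Omega> g x" .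
  qed
  then show ?thesis
    using lower_D_continuous_lower_env_self[OF assms(1,3)] by simp
qed

lemma lower_regularization_le:
  assumes "open \<Omega>" "lower_D_continuous \<Omega> a" "\<And>y. y \<in> \<Omega> \<Longrightarrow> g y \<le> a y" "x \<in> \<Omega>"
  shows "lower_regularization \<Omega> g x \<le> a x"
  unfolding lower_regularization_def
proof (rule SUP_least)
  fix \<delta> :: real assume "\<delta> \<in> {0<..}"
  show "inf_sup_open g (Bdelta \<Omega> \<delta> x) \<le> a x"
  proof (rule dense_ge)
    fix c assume "a x < c"
    define U where "U = interior {y \<in> Bdelta \<Omega> \<delta> x. a y < c}"
    have "U \<noteq> {}"
      unfolding U_def using assms(1,2,4) \<open>a x < c\<close> \<open>\<delta> \<in> {0<..}\<close>
      by (intro interior_sublevel_lower_D_continuous) auto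
    moreover have U: "U \<subseteq> {y \<in> Bdelta \<Omega> \<delta> x. a y < c}"
      unfolding U_def by (rule interior_subset)
    ultimately have "inf_sup_open g (Bdelta \<Omega> \<delta> x) \<le> (SUP y\<in>U. g y)"
      by (intro inf_sup_open_le_SUP) (auto simp: U_def)
    also have "\<dots> \<le> c"
      using U assms(3) Bdelta_subset by (intro SUP_least) (fastforce intro: order_trans less_imp_le)
    finally show "inf_sup_open g (Bdelta \<Omega> \<delta> x) \<le> c" .
  qed
qed

lemma inf_sup_open_le_uminus:
  assumes "open V" "V \<noteq> {}" "\<And>y. y \<in> V \<Longrightarrow> \<phi> y \<le> h y" "\<And>t. open {y \<in> V. t < \<phi> y}"
  shows "inf_sup_open \<phi> V \<le> - inf_sup_open (\<lambda>y. - h y) V"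
proof (rule dense_le)
  fix t assume t: "t < inf_sup_open \<phi> V"
  define W where "W = {y \<in> V. t < \<phi> y}"
  have "W \<noteq> {}"
  proof
    assume "W = {}"
    then have "(SUP y\<in>V. \<phi> y) \<le> t"
      by (auto simp: W_def not_less intro!: SUP_least)
    moreover have "inf_sup_open \<phi> V \<le> (SUP y\<in>V. \<phi> y)"
      using assms(1,2) by (rule inf_sup_open_le_SUP) simp
    ultimately show False
      using t by simp
  qed
  then have "inf_sup_open (\<lambda>y. - h y) V \<le> (SUP y\<in>W. - h y)"
    using assms(4)[of t] by (intro inf_sup_open_le_SUP) (auto simp: W_def)
  also have "\<dots> \<le> - t"
    using assms(3) by (intro SUP_least) (fastforce simp: W_def intro: order_trans less_imp_le)
  finally show "t \<le> - inf_sup_open (\<lambda>y. - h y) V"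
    by (simp add: ereal_le_uminus_reorder)
qed

lemma lower_regularization_le_uminus:
  assumes "open \<Omega>" "x \<in> \<Omega>" "\<And>y. y \<in> \<Omega> \<Longrightarrow> \<phi> y \<le> h y" "\<And>t. open {y \<in> \<Omega>. t < \<phi> y}"
  shows "lower_regularization \<Omega> \<phi> x \<le> - lower_regularization \<Omega> (\<lambda>y. - h y) x"
proof -
  have radii: "inf_sup_open (\<lambda>y. - h y) (Bdelta \<Omega> \<delta>\<^sub>2 x) \<le> - inf_sup_open \<phi> (Bdelta \<Omega> \<delta>\<^sub>1 x)"
    if "0 < \<delta>\<^sub>1" "0 < \<delta>\<^sub>2" for \<delta>\<^sub>1 \<delta>\<^sub>2
  proof -
    define V where "V = Bdelta \<Omega> (min \<delta>\<^sub>1 \<delta>\<^sub>2) x"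
    have "open V" "V \<noteq> {}"
      using assms(1) centre_in_Bdelta[OF assms(2), of "min \<delta>\<^sub>1 \<delta>\<^sub>2"] that
      by (auto simp: V_def open_Bdelta)
    moreover have "\<And>y. y \<in> V \<Longrightarrow> \<phi> y \<le> h y"
      using assms(3) Bdelta_subset unfolding V_def by blast
    moreover have "open {y \<in> V. t < \<phi> y}" for t
    proof -
      have "{y \<in> V. t < \<phi> y} = V \<inter> {y \<in> \<Omega>. t < \<phi> y}"
        using Bdelta_subset by (auto simp: V_def)
      then show ?thesis
        using \<open>open V\<close> assms(4) by auto
    qed
    ultimately have "inf_sup_open \<phi> V \<le> - inf_sup_open (\<lambda>y. - h y) V"
      by (rule inf_sup_open_le_uminus)
    have "inf_sup_open (\<lambda>y. - h y) (Bdelta \<Omega> \<delta>\<^sub>2 x) \<le> inf_sup_open (\<lambda>y. - h y) V"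
      unfolding V_def by (intro inf_sup_open_antimono Bdelta_mono) simp
    also have "\<dots> \<le> - inf_sup_open \<phi> V"
      using \<open>inf_sup_open \<phi> V \<le> _\<close> by (rule ereal_le_uminus_reorder[THEN iffD1])
    also have "\<dots> \<le> - inf_sup_open \<phi> (Bdelta \<Omega> \<delta>\<^sub>1 x)"
      unfolding V_def ereal_minus_le_minus by (intro inf_sup_open_antimono Bdelta_mono) simp
    finally show ?thesis .
  qed
  show ?thesis
    unfolding lower_regularization_def
  proof (intro SUP_least)
    fix \<delta>\<^sub>1 :: real assume "\<delta>\<^sub>1 \<in> {0<..}"
    with radii have "(SUP \<delta>\<^sub>2\<in>{0<..}. inf_sup_open (\<lambda>y. - h y) (Bdelta \<Omega> \<delta>\<^sub>2 x))
        \<le> - inf_sup_open \<phi> (Bdelta \<Omega> \<delta>\<^sub>1 x)"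
      by (auto intro: SUP_least)
    then show "inf_sup_open \<phi> (Bdelta \<Omega> \<delta>\<^sub>1 x)
        \<le> - (SUP \<delta>\<^sub>2\<in>{0<..}. inf_sup_open (\<lambda>y. - h y) (Bdelta \<Omega> \<delta>\<^sub>2 x))"
      by (rule ereal_le_uminus_reorder[THEN iffD1])
  qed
qed

lemma Inf_vals:
  assumes "\<And>y. y \<in> D \<Longrightarrow> fst (f y) \<le> snd (f y)"
  shows "Inf (vals D \<Omega> f \<delta> x) = (INF y\<in>Bdelta \<Omega> \<delta> x \<inter> D. fst (f y))"
proof (rule antisym)
  show "Inf (vals D \<Omega> f \<delta> x) \<le> (INF y\<in>Bdelta \<Omega> \<delta> x \<inter> D. fst (f y))"
    using assms by (intro INF_greatest Inf_lower) (auto simp: vals_def)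
  show "(INF y\<in>Bdelta \<Omega> \<delta> x \<inter> D. fst (f y)) \<le> Inf (vals D \<Omega> f \<delta> x)"
    by (auto intro!: Inf_greatest simp: vals_def intro: INF_lower2)
qed

lemma Sup_vals:
  assumes "\<And>y. y \<in> D \<Longrightarrow> fst (f y) \<le> snd (f y)"
  shows "Sup (vals D \<Omega> f \<delta> x) = (SUP y\<in>Bdelta \<Omega> \<delta> x \<inter> D. snd (f y))"
proof (rule antisym)
  show "Sup (vals D \<Omega> f \<delta> x) \<le> (SUP y\<in>Bdelta \<Omega> \<delta> x \<inter> D. snd (f y))"
    by (auto intro!: Sup_least simp: vals_def intro: SUP_upper2)
  show "(SUP y\<in>Bdelta \<Omega> \<delta> x \<inter> D. snd (f y)) \<le> Sup (vals D \<Omega> f \<delta> x)"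
    using assms by (intro SUP_least Sup_upper) (auto simp: vals_def)
qed

lemma I_env_eq_lower_env:
  "(\<And>y. y \<in> D \<Longrightarrow> fst (f y) \<le> snd (f y)) \<Longrightarrow> I_env D \<Omega> f x = lower_env D \<Omega> (\<lambda>y. fst (f y)) x"
  unfolding I_env_def lower_env_def by (simp add: Inf_vals)

lemma S_env_eq_uminus_lower_env:
  "(\<And>y. y \<in> D \<Longrightarrow> fst (f y) \<le> snd (f y)) \<Longrightarrow> S_env D \<Omega> f x = - lower_env D \<Omega> (\<lambda>y. - snd (f y)) x"
  unfolding S_env_def lower_env_def by (simp add: Sup_vals ereal_INF_uminus_eq ereal_SUP_uminus_eq)

lemma D_continuous_iff:
  "D_continuous \<Omega> f \<longleftrightarrow>
    f \<in> ivl_funs \<Omega> \<and> lower_D_continuous \<Omega> (\<lambda>y. fst (f y)) \<and> lower_D_continuous \<Omega> (\<lambda>y. - snd (f y))"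
proof -
  have "F_env D \<Omega> f = f \<longleftrightarrow>
      (\<forall>x\<in>\<Omega>. lower_env D \<Omega> (\<lambda>y. fst (f y)) x = fst (f x)
        \<and> lower_env D \<Omega> (\<lambda>y. - snd (f y)) x = - snd (f x))"
    if "f \<in> ivl_funs \<Omega>" "dense_in D \<Omega>" for D
  proof -
    have "\<And>y. y \<in> D \<Longrightarrow> fst (f y) \<le> snd (f y)"
      using that by (auto simp: ivl_funs_def dense_in_def)
    with that(1) show ?thesis
      by (auto simp: F_env_def ivl_funs_def fun_eq_iff prod_eq_iff I_env_eq_lower_env
          S_env_eq_uminus_lower_env ereal_uminus_eq_reorder)
  qed
  then show ?thesis
    unfolding D_continuous_def lower_D_continuous_def by auto
qed

definition G_Sup :: "('a::metric_space) set \<Rightarrow> ('a \<Rightarrow> ivl) set \<Rightarrow> 'a \<Rightarrow> ivl" where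
  "G_Sup \<Omega> S x =
    (if x \<in> \<Omega>
     then (lower_regularization \<Omega> (\<lambda>y. SUP f\<in>S. fst (f y)) x,
           - lower_regularization \<Omega> (\<lambda>y. - (SUP f\<in>S. snd (f y))) x)
     else undefined)"

lemma G_Sup_in_G_set:
  assumes "open \<Omega>" "S \<subseteq> G_set \<Omega>"
  shows "G_Sup \<Omega> S \<in> G_set \<Omega>"
proof -
  have S: "f \<in> ivl_funs \<Omega>" "lower_D_continuous \<Omega> (\<lambda>y. fst (f y))" if "f \<in> S" for f
    using assms(2) that by (auto simp: G_set_def D_continuous_iff)
  have le: "(SUP f\<in>S. fst (f y)) \<le> (SUP f\<in>S. snd (f y))" if "y \<in> \<Omega>" for y
    using S(1) that by (auto intro!: SUP_mono simp: ivl_funs_def)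
  have superlevel: "open {y \<in> \<Omega>. t < (SUP f\<in>S. fst (f y))}" for t
  proof -
    have "{y \<in> \<Omega>. t < (SUP f\<in>S. fst (f y))} = (\<Union>f\<in>S. {y \<in> \<Omega>. t < fst (f y)})"
      by (auto simp: less_SUP_iff)
    then show ?thesis
      using assms(1) S(2) by (simp add: open_UN open_superlevel_lower_D_continuous)
  qed
  have "lower_regularization \<Omega> (\<lambda>y. SUP f\<in>S. fst (f y)) x
      \<le> - lower_regularization \<Omega> (\<lambda>y. - (SUP f\<in>S. snd (f y))) x" if "x \<in> \<Omega>" for x
    using assms(1) that le superlevel by (rule lower_regularization_le_uminus)
  then have "G_Sup \<Omega> S \<in> ivl_funs \<Omega>"
    by (simp add: ivl_funs_def G_Sup_def)
  moreover have "lower_D_continuous \<Omega> (\<lambda>y. fst (G_Sup \<Omega> S y))"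
    by (rule lower_D_continuous_cong[OF lower_D_continuous_lower_regularization[OF assms(1)]])
      (simp add: G_Sup_def)
  moreover have "lower_D_continuous \<Omega> (\<lambda>y. - snd (G_Sup \<Omega> S y))"
    by (rule lower_D_continuous_cong[OF lower_D_continuous_lower_regularization[OF assms(1)]])
      (simp add: G_Sup_def)
  ultimately show ?thesis
    by (simp add: G_set_def D_continuous_iff)
qed

lemma G_Sup_upper:
  assumes "open \<Omega>" "S \<subseteq> G_set \<Omega>" "f \<in> S"
  shows "ivl_le \<Omega> f (G_Sup \<Omega> S)"
  unfolding ivl_le_def
proof (intro ballI conjI)
  fix x assume "x \<in> \<Omega>"
  have f: "lower_D_continuous \<Omega> (\<lambda>y. fst (f y))" "lower_D_continuous \<Omega> (\<lambda>y. - snd (f y))"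
    using assms(2,3) by (auto simp: G_set_def D_continuous_iff)
  have "fst (f x) \<le> lower_regularization \<Omega> (\<lambda>y. SUP f\<in>S. fst (f y)) x"
    using f(1) _ \<open>x \<in> \<Omega>\<close> by (rule le_lower_regularization) (use assms(3) in \<open>auto intro: SUP_upper\<close>)
  then show "fst (f x) \<le> fst (G_Sup \<Omega> S x)"
    using \<open>x \<in> \<Omega>\<close> by (simp add: G_Sup_def)
  have "lower_regularization \<Omega> (\<lambda>y. - (SUP f\<in>S. snd (f y))) x \<le> - snd (f x)"
    using assms(1) f(2) _ \<open>x \<in> \<Omega>\<close> by (rule lower_regularization_le) (use assms(3) in \<open>auto intro: SUP_upper\<close>)
  then show "snd (f x) \<le> snd (G_Sup \<Omega> S x)"
    using \<open>x \<in> \<Omega>\<close> by (simp add: G_Sup_def ereal_le_uminus_reorder)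
qed

lemma G_Sup_least:
  assumes "open \<Omega>" "u \<in> G_set \<Omega>" "\<And>f. f \<in> S \<Longrightarrow> ivl_le \<Omega> f u"
  shows "ivl_le \<Omega> (G_Sup \<Omega> S) u"
  unfolding ivl_le_def
proof (intro ballI conjI)
  fix x assume "x \<in> \<Omega>"
  have u: "lower_D_continuous \<Omega> (\<lambda>y. fst (u y))" "lower_D_continuous \<Omega> (\<lambda>y. - snd (u y))"
    using assms(2) by (auto simp: G_set_def D_continuous_iff)
  have "lower_regularization \<Omega> (\<lambda>y. SUP f\<in>S. fst (f y)) x \<le> fst (u x)"
    using assms(1) u(1) _ \<open>x \<in> \<Omega>\<close> by (rule lower_regularization_le)
      (use assms(3) in \<open>auto simp: ivl_le_def intro!: SUP_least\<close>)
  then show "fst (G_Sup \<Omega> S x) \<le> fst (u x)"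
    using \<open>x \<in> \<Omega>\<close> by (simp add: G_Sup_def)
  have "- snd (u x) \<le> lower_regularization \<Omega> (\<lambda>y. - (SUP f\<in>S. snd (f y))) x"
    using u(2) _ \<open>x \<in> \<Omega>\<close> by (rule le_lower_regularization)
      (use assms(3) in \<open>auto simp: ivl_le_def intro!: SUP_least\<close>)
  then show "snd (G_Sup \<Omega> S x) \<le> snd (u x)"
    using \<open>x \<in> \<Omega>\<close> by (simp add: G_Sup_def ereal_uminus_le_reorder)
qed

lemma is_sup_in_G_Sup:
  "open \<Omega> \<Longrightarrow> S \<subseteq> G_set \<Omega> \<Longrightarrow> is_sup_in (ivl_le \<Omega>) (G_set \<Omega>) S (G_Sup \<Omega> S)"
  by (simp add: is_sup_in_def G_Sup_in_G_set G_Sup_upper G_Sup_least)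

lemma G_set_has_inf:
  assumes "open \<Omega>" "S \<subseteq> G_set \<Omega>"
  shows "\<exists>s. is_inf_in (ivl_le \<Omega>) (G_set \<Omega>) S s"
proof -
  define L where "L = {l \<in> G_set \<Omega>. \<forall>f\<in>S. ivl_le \<Omega> l f}"
  have "L \<subseteq> G_set \<Omega>"
    by (simp add: L_def)
  with assms(1) have "is_sup_in (ivl_le \<Omega>) (G_set \<Omega>) L (G_Sup \<Omega> L)"
    by (rule is_sup_in_G_Sup)
  then have "G_Sup \<Omega> L \<in> G_set \<Omega>"
    and "\<forall>f\<in>S. ivl_le \<Omega> (G_Sup \<Omega> L) f"
    and "\<forall>l\<in>G_set \<Omega>. (\<forall>f\<in>S. ivl_le \<Omega> l f) \<longrightarrow> ivl_le \<Omega> l (G_Sup \<Omega> L)"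
    using assms(2) unfolding is_sup_in_def L_def by auto
  then show ?thesis
    unfolding is_inf_in_def by blast
qed

lemma is_sup_in_subset: "is_sup_in le P S s \<Longrightarrow> s \<in> Q \<Longrightarrow> Q \<subseteq> P \<Longrightarrow> is_sup_in le Q S s"
  unfolding is_sup_in_def by blast

lemma is_inf_in_subset: "is_inf_in le P S s \<Longrightarrow> s \<in> Q \<Longrightarrow> Q \<subseteq> P \<Longrightarrow> is_inf_in le Q S s"
  unfolding is_inf_in_def by blast

lemma G_set_subset_ivl_funs: "G_set \<Omega> \<subseteq> ivl_funs \<Omega>"
  by (auto simp: G_set_def D_continuous_def)

lemma dedekind_complete_order_convex:
  assumes "open \<Omega>"
    and convex: "\<And>a b s. s \<in> ivl_funs \<Omega> \<Longrightarrow> P a \<Longrightarrow> P b \<Longrightarrow> ivl_le \<Omega> a s \<Longrightarrow> ivl_le \<Omega> s b \<Longrightarrow> P s"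
  shows "dedekind_complete (ivl_le \<Omega>) {f \<in> G_set \<Omega>. P f}"
  unfolding dedekind_complete_def
proof (intro conjI allI impI)
  fix S assume "S \<subseteq> {f \<in> G_set \<Omega>. P f} \<and> S \<noteq> {} \<and> (\<exists>u\<in>{f \<in> G_set \<Omega>. P f}. \<forall>f\<in>S. ivl_le \<Omega> f u)"
  then obtain f u where S: "S \<subseteq> G_set \<Omega>" "f \<in> S" "P f" and u: "u \<in> G_set \<Omega>" "P u" "\<forall>f\<in>S. ivl_le \<Omega> f u"
    by blast
  from assms(1) S(1) have sup: "is_sup_in (ivl_le \<Omega>) (G_set \<Omega>) S (G_Sup \<Omega> S)"
    by (rule is_sup_in_G_Sup)
  then have bounds: "G_Sup \<Omega> S \<in> ivl_funs \<Omega>" "ivl_le \<Omega> f (G_Sup \<Omega> S)" "ivl_le \<Omega> (G_Sup \<Omega> S) u"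
    using S(2) u(1,3) G_set_subset_ivl_funs unfolding is_sup_in_def by blast+
  have "P (G_Sup \<Omega> S)"
    using bounds(1) S(3) u(2) bounds(2,3) by (rule convex)
  moreover have "G_Sup \<Omega> S \<in> G_set \<Omega>"
    using sup by (simp add: is_sup_in_def)
  ultimately have "is_sup_in (ivl_le \<Omega>) {f \<in> G_set \<Omega>. P f} S (G_Sup \<Omega> S)"
    using sup by (intro is_sup_in_subset[OF sup]) auto
  then show "\<exists>s. is_sup_in (ivl_le \<Omega>) {f \<in> G_set \<Omega>. P f} S s"
    by blast
next
  fix S assume "S \<subseteq> {f \<in> G_set \<Omega>. P f} \<and> S \<noteq> {} \<and> (\<exists>l\<in>{f \<in> G_set \<Omega>. P f}. \<forall>f\<in>S. ivl_le \<Omega> l f)"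
  then obtain f l where S: "S \<subseteq> G_set \<Omega>" "f \<in> S" "P f" and l: "l \<in> G_set \<Omega>" "P l" "\<forall>f\<in>S. ivl_le \<Omega> l f"
    by blast
  obtain s where inf: "is_inf_in (ivl_le \<Omega>) (G_set \<Omega>) S s"
    using G_set_has_inf[OF assms(1) S(1)] by blast
  then have bounds: "s \<in> ivl_funs \<Omega>" "ivl_le \<Omega> l s" "ivl_le \<Omega> s f"
    using S(2) l(1,3) G_set_subset_ivl_funs unfolding is_inf_in_def by blast+
  have "P s"
    using bounds(1) l(2) S(3) bounds(2,3) by (rule convex)
  moreover have "s \<in> G_set \<Omega>"
    using inf by (simp add: is_inf_in_def)
  ultimately have "is_inf_in (ivl_le \<Omega>) {f \<in> G_set \<Omega>. P f} S s"
    using inf by (intro is_inf_in_subset[OF inf]) auto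
  then show "\<exists>s. is_inf_in (ivl_le \<Omega>) {f \<in> G_set \<Omega>. P f} S s"
    by blast
qed

lemma ivl_bounded_between:
  assumes "ivl_bounded \<Omega> a" "ivl_bounded \<Omega> b" "ivl_le \<Omega> a s" "ivl_le \<Omega> s b"
  shows "ivl_bounded \<Omega> s"
proof -
  obtain M\<^sub>1 M\<^sub>2 :: real where "\<forall>x\<in>\<Omega>. - ereal M\<^sub>1 \<le> fst (a x)" "\<forall>x\<in>\<Omega>. snd (b x) \<le> ereal M\<^sub>2"
    using assms(1,2) by (auto simp: ivl_bounded_def)
  moreover have "- ereal (max M\<^sub>1 M\<^sub>2) \<le> - ereal M\<^sub>1" "ereal M\<^sub>2 \<le> ereal (max M\<^sub>1 M\<^sub>2)"
    by (simp_all only: uminus_ereal.simps ereal_less_eq(3))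
  ultimately have "\<forall>x\<in>\<Omega>. - ereal (max M\<^sub>1 M\<^sub>2) \<le> fst (s x) \<and> snd (s x) \<le> ereal (max M\<^sub>1 M\<^sub>2)"
    using assms(3,4) unfolding ivl_le_def by (meson order_trans)
  then show ?thesis
    unfolding ivl_bounded_def by blast
qed

lemma finite_ivl_between:
  assumes "finite_ivl p" "finite_ivl q" "fst p \<le> fst r" "fst r \<le> snd r" "snd r \<le> snd q"
  shows "finite_ivl r"
proof -
  have "-\<infinity> < fst p" "snd q < \<infinity>"
    using assms(1,2) by (auto simp: finite_ivl_def)
  then have "-\<infinity> < fst r" "snd r < \<infinity>"
    using assms(3,5) by (auto intro: less_le_trans le_less_trans)
  with assms(4) show ?thesis
    by (auto simp: finite_ivl_def)
qed

lemma ivl_finite_between: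
  assumes "s \<in> ivl_funs \<Omega>" "ivl_finite \<Omega> a" "ivl_finite \<Omega> b" "ivl_le \<Omega> a s" "ivl_le \<Omega> s b"
  shows "ivl_finite \<Omega> s"
  using assms unfolding ivl_finite_def ivl_le_def ivl_funs_def by (blast intro: finite_ivl_between)

lemma ivl_nearly_finite_between:
  assumes "s \<in> ivl_funs \<Omega>" "ivl_nearly_finite \<Omega> a" "ivl_nearly_finite \<Omega> b"
    "ivl_le \<Omega> a s" "ivl_le \<Omega> s b"
  shows "ivl_nearly_finite \<Omega> s"
proof -
  obtain D\<^sub>1 D\<^sub>2 where D\<^sub>1: "open D\<^sub>1" "dense_in D\<^sub>1 \<Omega>" "\<forall>x\<in>D\<^sub>1. finite_ivl (a x)"
    and D\<^sub>2: "open D\<^sub>2" "dense_in D\<^sub>2 \<Omega>" "\<forall>x\<in>D\<^sub>2. finite_ivl (b x)"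
    using assms(2,3) by (auto simp: ivl_nearly_finite_def)
  have "D\<^sub>1 \<inter> D\<^sub>2 \<subseteq> \<Omega>"
    using D\<^sub>1(2) by (auto simp: dense_in_def)
  then have "\<forall>x\<in>D\<^sub>1 \<inter> D\<^sub>2. finite_ivl (s x)"
    using assms(1,4,5) D\<^sub>1(3) D\<^sub>2(3) unfolding ivl_le_def ivl_funs_def
    by (blast intro: finite_ivl_between)
  moreover have "dense_in (D\<^sub>1 \<inter> D\<^sub>2) \<Omega>"
    using D\<^sub>1(1,2) D\<^sub>2(2) by (rule dense_in_Int_open)
  ultimately show ?thesis
    unfolding ivl_nearly_finite_def using D\<^sub>1(1) D\<^sub>2(1) by blast
qed

theorem theorem15:
  fixes \<Omega> :: "(real ^ 'n) set"
  assumes "open \<Omega>"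
  shows "order_complete (ivl_le \<Omega>) (G_set \<Omega>)
    \<and> dedekind_complete (ivl_le \<Omega>) {f \<in> G_set \<Omega>. ivl_bounded \<Omega> f}
    \<and> dedekind_complete (ivl_le \<Omega>) {f \<in> G_set \<Omega>. ivl_finite \<Omega> f}
    \<and> dedekind_complete (ivl_le \<Omega>) {f \<in> G_set \<Omega>. ivl_nearly_finite \<Omega> f}"
proof (intro conjI)
  show "order_complete (ivl_le \<Omega>) (G_set \<Omega>)"
    unfolding order_complete_def using is_sup_in_G_Sup[OF assms] G_set_has_inf[OF assms] by blast
  show "dedekind_complete (ivl_le \<Omega>) {f \<in> G_set \<Omega>. ivl_bounded \<Omega> f}"
    using assms by (rule dedekind_complete_order_convex) (rule ivl_bounded_between)
  show "dedekind_complete (ivl_le \<Omega>) {f \<in> G_set \<Omega>. ivl_finite \<Omega> f}"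
    using assms by (rule dedekind_complete_order_convex) (rule ivl_finite_between)
  show "dedekind_complete (ivl_le \<Omega>) {f \<in> G_set \<Omega>. ivl_nearly_finite \<Omega> f}"
    using assms by (rule dedekind_complete_order_convex) (rule ivl_nearly_finite_between)
qed

end
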